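(* Let $N\ge1$ and let $\Phi\in\mathbb R_N^{\otimes 4}$ be a real self-transpose tensor, i.e. with components satisfying $\Phi_{ijkl}=\Phi_{lkji}$ for all $i,j,k,l\in\{1,\dots,N\}$, distributed according to $$\mathcal Z_{\rm ST}(\lambda)=\int\mathcal D\Phi\,e^{-S_{\rm ST}[\Phi](\lambda)},\qquad S_{\rm ST}[\Phi](\lambda)=N\Big(\frac12\sum_{ijkl}\Phi_{ijkl}\Phi_{ijkl}+\frac{\lambda}{2}\sum_{ijkl}\Phi_{ijkl}\Phi_{ikjl}\Big).$$ Then $$\frac{\mathcal Z_{\rm ST}(\lambda)}{\mathcal Z_{\rm ST}(0)}=(1+\lambda)^{-\frac12\left(\frac{N(N+1)}{2}\right)^2}(1-\lambda)^{-\frac12\left(\frac{N(N-1)}{2}\right)^2}.$$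
   Context: $\mathcal D\Phi$ is Lebesgue measure on the real vector space of self-transpose tensors (product of $d\Phi_{ijkl}$ over a set of independent components). *)

theory Defs
  imports "HOL-Analysis.Analysis"
begin

type_synonym idx4 = "nat \<times> nat \<times> nat \<times> nat"

definition Idx :: "nat \<Rightarrow> idx4 set" where
  "Idx N = {(i,j,k,l). i < N \<and> j < N \<and> k < N \<and> l < N}"

fun tr4 :: "idx4 \<Rightarrow> idx4" where
  "tr4 (i,j,k,l) = (l,k,j,i)"

text \<open>A set of independent components: one representative of each orbit of tr4.\<close>
definition IndepIdx :: "nat \<Rightarrow> idx4 set" where
  "IndepIdx N = {(i,j,k,l) \<in> Idx N. i < l \<or> (i = l \<and> j \<le> k)}"

definition ST_tensor :: "nat \<Rightarrow> (idx4 \<Rightarrow> real) \<Rightarrow> idx4 \<Rightarrow> real" where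
  "ST_tensor N x t = (if t \<in> IndepIdx N then x t else x (tr4 t))"

definition self_transpose :: "nat \<Rightarrow> (idx4 \<Rightarrow> real) \<Rightarrow> bool" where
  "self_transpose N \<Phi> \<longleftrightarrow> (\<forall>t \<in> Idx N. \<Phi> t = \<Phi> (tr4 t))"

definition S_ST :: "nat \<Rightarrow> real \<Rightarrow> (idx4 \<Rightarrow> real) \<Rightarrow> real" where
  "S_ST N lam \<Phi> = real N * ((1/2) * (\<Sum>(i,j,k,l)\<in>Idx N. \<Phi> (i,j,k,l) * \<Phi> (i,j,k,l))
      + (lam/2) * (\<Sum>(i,j,k,l)\<in>Idx N. \<Phi> (i,j,k,l) * \<Phi> (i,k,j,l)))"

text \<open>Partition function: integral over Lebesgue measure on the independent components.\<close>
definition Z_ST :: "nat \<Rightarrow> real \<Rightarrow> real" where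
  "Z_ST N lam = (\<integral>x. exp (- S_ST N lam (ST_tensor N x)) \<partial>(PiM (IndepIdx N) (\<lambda>_. lborel)))"

end

theory Submission
  imports Defs "HOL-Probability.Distributions"
begin

(* The action couples each component only with its image under the middle swap
   (i,j,k,l) -> (i,k,j,l).  Together with self-transposition this swap generates a Klein
   four-group acting on index tuples, and the action splits into a sum over its orbits, each
   term depending only on the independent components in that orbit.  A free orbit (i < l and
   j < k) carries two independent components u, v and contributes N (u^2 + v^2 + 2 lam u v);
   every other orbit carries one component u and contributes a positive multiple of
   (1 + lam) u^2.  The Gaussian integral therefore factorises into one- and two-dimensional
   Gaussian integrals: each orbit contributes a factor (1 + lam) powr (-1/2) to the ratio, and
   each free orbit an extra factor (1 - lam) powr (-1/2).  There are (N(N+1)/2)^2 orbits, of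
   which (N(N-1)/2)^2 are free. *)

lemma nn_integral_exp_neg_square:
  fixes a m :: real
  assumes "0 < a"
  shows "(\<integral>\<^sup>+x. ennreal (exp (- (a * (x - m)\<^sup>2))) \<partial>lborel) = ennreal (sqrt (pi / a))"
proof -
  define \<sigma> where "\<sigma> = 1 / sqrt (2 * a)"
  have "0 < \<sigma>" and \<sigma>2: "\<sigma>\<^sup>2 = 1 / (2 * a)"
    using assms by (simp_all add: \<sigma>_def power_divide)
  have \<sigma>: "2 * pi * \<sigma>\<^sup>2 = pi / a" "- (x - m)\<^sup>2 / (2 * \<sigma>\<^sup>2) = - (a * (x - m)\<^sup>2)" for x
    unfolding \<sigma>2 using assms by simp_all
  have "normal_density m \<sigma> x = exp (- (a * (x - m)\<^sup>2)) / sqrt (pi / a)" for x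
    unfolding normal_density_def \<sigma> by simp
  then have density: "exp (- (a * (x - m)\<^sup>2)) = sqrt (pi / a) * normal_density m \<sigma> x" for x
    using assms by simp
  have "(\<integral>\<^sup>+x. ennreal (exp (- (a * (x - m)\<^sup>2))) \<partial>lborel)
      = (\<integral>\<^sup>+x. ennreal (sqrt (pi / a)) * ennreal (normal_density m \<sigma> x) \<partial>lborel)"
    unfolding density using assms by (intro nn_integral_cong ennreal_mult') simp
  also have "\<dots> = ennreal (sqrt (pi / a)) * (\<integral>\<^sup>+x. ennreal (normal_density m \<sigma> x) \<partial>lborel)"
    by (rule nn_integral_cmult) simp
  also have "(\<integral>\<^sup>+x. ennreal (normal_density m \<sigma> x) \<partial>lborel) = 1"
    using \<open>0 < \<sigma>\<close> by (subst nn_integral_eq_integral) auto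
  finally show ?thesis by simp
qed

lemma nn_integral_exp_neg_quadratic:
  fixes a b :: real
  assumes "0 < a"
  shows "(\<integral>\<^sup>+x. ennreal (exp (- (a * x\<^sup>2 + b * x))) \<partial>lborel)
    = ennreal (exp (b\<^sup>2 / (4 * a)) * sqrt (pi / a))"
proof -
  define m where "m = - b / (2 * a)"
  have square: "exp (- (a * x\<^sup>2 + b * x)) = exp (b\<^sup>2 / (4 * a)) * exp (- (a * (x - m)\<^sup>2))" for x
    using assms by (simp add: m_def exp_add[symmetric] power2_eq_square field_simps)
  show ?thesis
    by (simp only: square ennreal_mult' exp_ge_zero)
      (simp add: nn_integral_cmult nn_integral_exp_neg_square[OF assms] ennreal_mult)
qed

lemma nn_integral_PiM_exp_neg_binary_form:
  fixes c lam :: real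
  assumes "i \<noteq> j" "0 < c" "lam\<^sup>2 < 1"
  shows "(\<integral>\<^sup>+x. ennreal (exp (- (c * ((x i)\<^sup>2 + (x j)\<^sup>2 + 2 * lam * x i * x j))))
      \<partial>PiM {i, j} (\<lambda>_. lborel))
    = ennreal (pi / (c * sqrt (1 - lam\<^sup>2)))"
proof -
  interpret product_sigma_finite "\<lambda>_. lborel :: real measure"
    by unfold_locales
  have "0 < c * (1 - lam\<^sup>2)"
    using assms by simp
  have inner: "(\<integral>\<^sup>+y. ennreal (exp (- (c * (y\<^sup>2 + v\<^sup>2 + 2 * lam * y * v)))) \<partial>lborel)
      = ennreal (sqrt (pi / c)) * ennreal (exp (- (c * (1 - lam\<^sup>2) * v\<^sup>2)))" for v
  proof -
    have split: "exp (- (c * (y\<^sup>2 + v\<^sup>2 + 2 * lam * y * v)))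
        = exp (- (c * v\<^sup>2)) * exp (- (c * y\<^sup>2 + (2 * c * lam * v) * y))" for y
      by (simp add: exp_add[symmetric] algebra_simps)
    have "(\<integral>\<^sup>+y. ennreal (exp (- (c * (y\<^sup>2 + v\<^sup>2 + 2 * lam * y * v)))) \<partial>lborel)
        = (\<integral>\<^sup>+y. ennreal (exp (- (c * v\<^sup>2))) * ennreal (exp (- (c * y\<^sup>2 + (2 * c * lam * v) * y)))
            \<partial>lborel)"
      by (simp only: split ennreal_mult' exp_ge_zero)
    also have "\<dots>
        = ennreal (exp (- (c * v\<^sup>2))) * ennreal (exp ((2 * c * lam * v)\<^sup>2 / (4 * c)) * sqrt (pi / c))"
      using nn_integral_exp_neg_quadratic[OF \<open>0 < c\<close>, of "2 * c * lam * v"]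
      by (subst nn_integral_cmult) simp_all
    also have "\<dots> = ennreal (sqrt (pi / c)) * ennreal (exp (- (c * (1 - lam\<^sup>2) * v\<^sup>2)))"
      using \<open>0 < c\<close>
      by (simp add: ennreal_mult'[symmetric] exp_add[symmetric] power2_eq_square algebra_simps)
    finally show ?thesis .
  qed
  have "(\<integral>\<^sup>+x. ennreal (exp (- (c * ((x i)\<^sup>2 + (x j)\<^sup>2 + 2 * lam * x i * x j))))
        \<partial>PiM (insert i {j}) (\<lambda>_. lborel))
      = (\<integral>\<^sup>+x. ennreal (sqrt (pi / c)) * ennreal (exp (- (c * (1 - lam\<^sup>2) * (x j)\<^sup>2)))
        \<partial>PiM {j} (\<lambda>_. lborel))"
    using assms(1) by (subst product_nn_integral_insert) (simp_all add: inner)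
  also have "\<dots> = ennreal (sqrt (pi / c))
      * (\<integral>\<^sup>+v. ennreal (exp (- (c * (1 - lam\<^sup>2) * (v - 0)\<^sup>2))) \<partial>lborel)"
    by (subst product_nn_integral_singleton) (simp_all add: nn_integral_cmult)
  also have "\<dots> = ennreal (sqrt (pi / c) * sqrt (pi / (c * (1 - lam\<^sup>2))))"
    unfolding nn_integral_exp_neg_square[OF \<open>0 < c * (1 - lam\<^sup>2)\<close>]
    using assms by (intro ennreal_mult'[symmetric]) simp
  also have "sqrt (pi / c) * sqrt (pi / (c * (1 - lam\<^sup>2))) = pi / (c * sqrt (1 - lam\<^sup>2))"
    using assms by (simp add: real_sqrt_mult real_sqrt_divide)
  finally show ?thesis by simp
qed

context product_sigma_finite
begin

lemma measurable_PiM_depends_on: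
  assumes "f \<in> borel_measurable (PiM J M)" "\<And>x. f x = f (restrict x J)" "J \<subseteq> L"
  shows "f \<in> borel_measurable (PiM L M)"
proof -
  have "(\<lambda>x. f (restrict x J)) \<in> borel_measurable (PiM L M)"
    using measurable_restrict_subset[OF assms(3)] assms(1) by measurable
  then show ?thesis
    by (simp add: assms(2)[symmetric])
qed

lemma product_nn_integral_prod_blocks:
  fixes F :: "'k \<Rightarrow> ('i \<Rightarrow> 'a) \<Rightarrow> ennreal"
  assumes "finite K" "\<And>k. k \<in> K \<Longrightarrow> finite (B k)" "disjoint_family_on B K"
    and "\<And>k. k \<in> K \<Longrightarrow> F k \<in> borel_measurable (PiM (B k) M)"
    and "\<And>k x. k \<in> K \<Longrightarrow> F k x = F k (restrict x (B k))"
  shows "(\<integral>\<^sup>+x. (\<Prod>k\<in>K. F k x) \<partial>PiM (\<Union>k\<in>K. B k) M)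
    = (\<Prod>k\<in>K. \<integral>\<^sup>+x. F k x \<partial>PiM (B k) M)"
  using assms
proof (induction K rule: finite_induct)
  case empty
  show ?case by (simp add: PiM_empty)
next
  case (insert j K)
  let ?J = "\<Union>k\<in>K. B k"
  have disjoint: "B j \<inter> ?J = {}"
    using insert.prems(2) insert.hyps(2) unfolding disjoint_family_on_def by fastforce
  have meas_F: "F k \<in> borel_measurable (PiM L M)" if "k \<in> insert j K" "B k \<subseteq> L" for k L
    using measurable_PiM_depends_on insert.prems(3,4) that by blast
  have meas_prod: "(\<lambda>x. \<Prod>k\<in>K. F k x) \<in> borel_measurable (PiM L M)" if "?J \<subseteq> L" for L
    using that by (intro borel_measurable_prod_ennreal meas_F) auto
  have merge_left: "F j (merge (B j) ?J (x, y)) = F j x" for x y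
    using insert.prems(4)[of j] disjoint by (metis insertI1 restrict_merge(1))
  have merge_right: "F k (merge (B j) ?J (x, y)) = F k y" if "k \<in> K" for k x y
  proof -
    have "restrict (merge (B j) ?J (x, y)) (B k) = restrict y (B k)"
      using that disjoint by (auto simp: merge_def restrict_def fun_eq_iff)
    then show ?thesis
      using insert.prems(4)[of k] that by (metis insertI2)
  qed
  have "(\<integral>\<^sup>+x. (\<Prod>k\<in>insert j K. F k x) \<partial>PiM (\<Union>k\<in>insert j K. B k) M)
      = (\<integral>\<^sup>+x. F j x * (\<Prod>k\<in>K. F k x) \<partial>PiM (B j \<union> ?J) M)"
    using insert.hyps by simp
  also have "\<dots> = (\<integral>\<^sup>+x. \<integral>\<^sup>+y. F j (merge (B j) ?J (x, y)) * (\<Prod>k\<in>K. F k (merge (B j) ?J (x, y)))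
      \<partial>PiM ?J M \<partial>PiM (B j) M)"
    using insert.hyps(1) insert.prems(1)
    by (intro product_nn_integral_fold disjoint borel_measurable_times_ennreal meas_F meas_prod) auto
  also have "\<dots> = (\<integral>\<^sup>+x. F j x * (\<integral>\<^sup>+y. (\<Prod>k\<in>K. F k y) \<partial>PiM ?J M) \<partial>PiM (B j) M)"
    by (simp add: merge_left merge_right nn_integral_cmult meas_prod)
  also have "\<dots> = (\<integral>\<^sup>+x. F j x \<partial>PiM (B j) M) * (\<integral>\<^sup>+y. (\<Prod>k\<in>K. F k y) \<partial>PiM ?J M)"
    by (intro nn_integral_multc meas_F) auto
  also have "(\<integral>\<^sup>+y. (\<Prod>k\<in>K. F k y) \<partial>PiM ?J M) = (\<Prod>k\<in>K. \<integral>\<^sup>+x. F k x \<partial>PiM (B k) M)"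
  proof (rule insert.IH)
    show "disjoint_family_on B K"
      using insert.prems(2) by (rule disjoint_family_on_mono[rotated]) auto
  qed (use insert.prems in \<open>blast+\<close>)
  finally show ?case
    using insert.hyps by simp
qed

end

fun swap_mid :: "idx4 \<Rightarrow> idx4" where
  "swap_mid (i, j, k, l) = (i, k, j, l)"

(* tr4 and swap_mid generate a Klein four-group acting on index tuples; orbit_rep is the
   representative of an orbit with i <= l and j <= k. *)
fun orbit_rep :: "idx4 \<Rightarrow> idx4" where
  "orbit_rep (i, j, k, l) = (min i l, min j k, max j k, max i l)"

definition orbit_reps :: "nat \<Rightarrow> idx4 set" where
  "orbit_reps N = {(a, b, c, d) \<in> Idx N. a \<le> d \<and> b \<le> c}"

fun free_orbit :: "idx4 \<Rightarrow> bool" where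
  "free_orbit (a, b, c, d) \<longleftrightarrow> a < d \<and> b < c"

(* For an orbit of size one or two, N/2 times its size. *)
fun orbit_weight :: "nat \<Rightarrow> idx4 \<Rightarrow> real" where
  "orbit_weight N (a, b, c, d) = (if a = d \<and> b = c then real N / 2 else real N)"

definition orbit_block :: "nat \<Rightarrow> idx4 \<Rightarrow> idx4 set" where
  "orbit_block N r = {r, swap_mid r} \<inter> IndepIdx N"

definition orbit_action :: "nat \<Rightarrow> real \<Rightarrow> idx4 \<Rightarrow> (idx4 \<Rightarrow> real) \<Rightarrow> real" where
  "orbit_action N lam r x =
    (if free_orbit r
     then real N * ((x r)\<^sup>2 + (x (swap_mid r))\<^sup>2 + 2 * lam * x r * x (swap_mid r))
     else orbit_weight N r * (1 + lam) * (x r)\<^sup>2)"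

lemma finite_orbit_reps [simp]: "finite (orbit_reps N)"
proof (rule finite_subset)
  show "orbit_reps N \<subseteq> {..<N} \<times> {..<N} \<times> {..<N} \<times> {..<N}"
    by (auto simp: orbit_reps_def Idx_def)
qed simp

lemma sum_orbit_eq_orbit_action:
  fixes x :: "idx4 \<Rightarrow> real"
  assumes "(a, b, c, d) \<in> orbit_reps N"
  defines "\<Phi> \<equiv> ST_tensor N x"
  shows "(\<Sum>t\<in>{t \<in> Idx N. orbit_rep t = (a, b, c, d)}.
      real N / 2 * (\<Phi> t * \<Phi> t + lam * (\<Phi> t * \<Phi> (swap_mid t))))
    = orbit_action N lam (a, b, c, d) x"
proof -
  have bounds: "a \<le> d" "b \<le> c" "d < N" "c < N"
    using assms(1) by (auto simp: orbit_reps_def Idx_def)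
  let ?orbit = "{t \<in> Idx N. orbit_rep t = (a, b, c, d)}"
  note defs = orbit_action_def \<Phi>_def ST_tensor_def IndepIdx_def Idx_def
  consider "a < d" "b < c" | "a < d" "b = c" | "a = d" "b < c" | "a = d" "b = c"
    using bounds by linarith
  then show ?thesis
  proof cases
    case 1
    then have "?orbit = {(a, b, c, d), (d, b, c, a), (a, c, b, d), (d, c, b, a)}"
      using bounds by (auto simp: Idx_def min_def max_def split: if_splits)
    then show ?thesis
      using 1 bounds by (simp add: defs power2_eq_square algebra_simps)
  next
    case 2
    then have "?orbit = {(a, b, b, d), (d, b, b, a)}"
      using bounds by (auto simp: Idx_def min_def max_def split: if_splits)
    then show ?thesis
      using 2 bounds by (simp add: defs power2_eq_square algebra_simps)
  next
    case 3
    then have "?orbit = {(a, b, c, a), (a, c, b, a)}"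
      using bounds by (auto simp: Idx_def min_def max_def split: if_splits)
    then show ?thesis
      using 3 bounds by (simp add: defs power2_eq_square algebra_simps)
  next
    case 4
    then have "?orbit = {(a, b, b, a)}"
      using bounds by (auto simp: Idx_def min_def max_def split: if_splits)
    then show ?thesis
      using 4 bounds by (simp add: defs power2_eq_square algebra_simps)
  qed
qed

lemma S_ST_eq_sum_orbit_action:
  "S_ST N lam (ST_tensor N x) = (\<Sum>r\<in>orbit_reps N. orbit_action N lam r x)"
proof -
  define \<Phi> where "\<Phi> = ST_tensor N x"
  have "(\<Sum>(i, j, k, l)\<in>Idx N. \<Phi> (i, j, k, l) * \<Phi> (i, j, k, l)) = (\<Sum>t\<in>Idx N. \<Phi> t * \<Phi> t)"
    and "(\<Sum>(i, j, k, l)\<in>Idx N. \<Phi> (i, j, k, l) * \<Phi> (i, k, j, l))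
      = (\<Sum>t\<in>Idx N. \<Phi> t * \<Phi> (swap_mid t))"
    by (auto intro: sum.cong)
  then have "S_ST N lam \<Phi>
      = (\<Sum>t\<in>Idx N. real N / 2 * (\<Phi> t * \<Phi> t + lam * (\<Phi> t * \<Phi> (swap_mid t))))"
    unfolding S_ST_def by (simp add: sum_distrib_left sum.distrib algebra_simps)
  also have "\<dots> = (\<Sum>r\<in>orbit_reps N. \<Sum>t\<in>{t \<in> Idx N. orbit_rep t = r}.
      real N / 2 * (\<Phi> t * \<Phi> t + lam * (\<Phi> t * \<Phi> (swap_mid t))))"
    by (rule sum.group[symmetric]) (simp_all, auto simp: orbit_reps_def Idx_def)
  also have "\<dots> = (\<Sum>r\<in>orbit_reps N. orbit_action N lam r x)"
    unfolding \<Phi>_def by (intro sum.cong refl) (auto simp only: sum_orbit_eq_orbit_action)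
  finally show ?thesis
    by (simp add: \<Phi>_def)
qed

lemma orbit_block_subset: "orbit_block N r \<subseteq> IndepIdx N"
  by (auto simp: orbit_block_def)

lemma orbit_rep_in_orbit_block:
  "r \<in> orbit_reps N \<Longrightarrow> t \<in> orbit_block N r \<Longrightarrow> orbit_rep t = r"
  by (cases r) (auto simp: orbit_reps_def orbit_block_def)

lemma disjoint_family_orbit_block: "disjoint_family_on (orbit_block N) (orbit_reps N)"
  unfolding disjoint_family_on_def using orbit_rep_in_orbit_block by blast

lemma UN_orbit_block: "(\<Union>r\<in>orbit_reps N. orbit_block N r) = IndepIdx N"
proof (intro equalityI subsetI)
  fix t assume "t \<in> IndepIdx N"
  then have "orbit_rep t \<in> orbit_reps N \<and> t \<in> orbit_block N (orbit_rep t)"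
    by (cases t) (auto simp: orbit_reps_def orbit_block_def IndepIdx_def Idx_def min_def max_def)
  then show "t \<in> (\<Union>r\<in>orbit_reps N. orbit_block N r)"
    by blast
qed (use orbit_block_subset in blast)

lemma orbit_block_free:
  "r \<in> orbit_reps N \<Longrightarrow> free_orbit r \<Longrightarrow>
    orbit_block N r = {r, swap_mid r} \<and> swap_mid r \<noteq> r"
  by (cases r) (auto simp: orbit_reps_def orbit_block_def IndepIdx_def Idx_def)

lemma orbit_block_not_free:
  "r \<in> orbit_reps N \<Longrightarrow> \<not> free_orbit r \<Longrightarrow> orbit_block N r = {r}"
  by (cases r) (auto simp: orbit_reps_def orbit_block_def IndepIdx_def Idx_def)

lemma orbit_action_restrict:
  "r \<in> orbit_reps N \<Longrightarrow>
    orbit_action N lam r (restrict x (orbit_block N r)) = orbit_action N lam r x"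
  by (cases "free_orbit r") (auto simp: orbit_action_def orbit_block_free orbit_block_not_free)

lemma measurable_orbit_action:
  assumes "r \<in> orbit_reps N"
  shows "orbit_action N lam r \<in> borel_measurable (PiM (orbit_block N r) (\<lambda>_. lborel))"
proof -
  have component: "(\<lambda>x. x t) \<in> borel_measurable (PiM (orbit_block N r) (\<lambda>_. lborel))"
    if "t \<in> orbit_block N r" for t
    using measurable_component_singleton[OF that, of "\<lambda>_. lborel"] by simp
  show ?thesis
  proof (cases "free_orbit r")
    case True
    with assms have "r \<in> orbit_block N r" "swap_mid r \<in> orbit_block N r"
      by (simp_all add: orbit_block_free)
    note [measurable] = this[THEN component]
    show ?thesis
      unfolding orbit_action_def using True by simp measurable
  next
    case False
    with assms have "r \<in> orbit_block N r"
      by (simp add: orbit_block_not_free)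
    note [measurable] = this[THEN component]
    show ?thesis
      unfolding orbit_action_def using False by simp measurable
  qed
qed

definition orbit_integral :: "nat \<Rightarrow> real \<Rightarrow> idx4 \<Rightarrow> real" where
  "orbit_integral N lam r =
    (if free_orbit r then pi / (real N * sqrt (1 - lam\<^sup>2))
     else sqrt (pi / (orbit_weight N r * (1 + lam))))"

lemma orbit_weight_pos: "N \<ge> 1 \<Longrightarrow> 0 < orbit_weight N r"
  by (cases r) auto

lemma orbit_integral_nonneg: "N \<ge> 1 \<Longrightarrow> \<bar>lam\<bar> < 1 \<Longrightarrow> 0 \<le> orbit_integral N lam r"
  unfolding orbit_integral_def using orbit_weight_pos[of N r] abs_square_less_1[of lam]
  by (auto intro!: divide_nonneg_nonneg)

lemma nn_integral_exp_neg_orbit_action: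
  assumes "r \<in> orbit_reps N" "N \<ge> 1" "\<bar>lam\<bar> < 1"
  shows "(\<integral>\<^sup>+x. ennreal (exp (- orbit_action N lam r x)) \<partial>PiM (orbit_block N r) (\<lambda>_. lborel))
    = ennreal (orbit_integral N lam r)"
proof (cases "free_orbit r")
  case True
  have "lam\<^sup>2 < 1"
    using assms(3) by (simp add: abs_square_less_1)
  from True have "orbit_block N r = {r, swap_mid r}" "r \<noteq> swap_mid r"
    using orbit_block_free[OF assms(1)] by auto
  with True show ?thesis
    using assms \<open>lam\<^sup>2 < 1\<close> nn_integral_PiM_exp_neg_binary_form[of r "swap_mid r" "real N" lam]
    by (simp add: orbit_action_def orbit_integral_def)
next
  case False
  interpret product_sigma_finite "\<lambda>_. lborel :: real measure"
    by unfold_locales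
  have "0 < orbit_weight N r * (1 + lam)"
    using assms orbit_weight_pos by simp
  have "(\<integral>\<^sup>+x. ennreal (exp (- orbit_action N lam r x)) \<partial>PiM (orbit_block N r) (\<lambda>_. lborel))
      = (\<integral>\<^sup>+x. (\<lambda>y. ennreal (exp (- (orbit_weight N r * (1 + lam) * (y - 0)\<^sup>2)))) (x r)
          \<partial>PiM {r} (\<lambda>_. lborel))"
    using assms False by (simp add: orbit_block_not_free orbit_action_def)
  also have "\<dots> = (\<integral>\<^sup>+y. ennreal (exp (- (orbit_weight N r * (1 + lam) * (y - 0)\<^sup>2))) \<partial>lborel)"
    by (rule product_nn_integral_singleton) simp
  also have "\<dots> = ennreal (orbit_integral N lam r)"
    using False
    by (simp only: nn_integral_exp_neg_square[OF \<open>0 < orbit_weight N r * (1 + lam)\<close>])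
      (simp add: orbit_integral_def)
  finally show ?thesis .
qed

lemma Z_ST_eq_prod_orbit_integral:
  assumes "N \<ge> 1" "\<bar>lam\<bar> < 1"
  shows "Z_ST N lam = (\<Prod>r\<in>orbit_reps N. orbit_integral N lam r)"
proof -
  interpret product_sigma_finite "\<lambda>_. lborel :: real measure"
    by unfold_locales
  let ?f = "\<lambda>r x. ennreal (exp (- orbit_action N lam r x))"
  let ?M = "\<lambda>I. PiM I (\<lambda>_. lborel :: real measure)"
  have density: "ennreal (exp (- S_ST N lam (ST_tensor N x))) = (\<Prod>r\<in>orbit_reps N. ?f r x)"
    for x
    by (simp add: S_ST_eq_sum_orbit_action exp_sum[symmetric] sum_negf prod_ennreal)
  have meas_block: "?f r \<in> borel_measurable (?M (orbit_block N r))" if "r \<in> orbit_reps N" for r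
    using measurable_orbit_action[OF that] by measurable
  have meas_action: "orbit_action N lam r \<in> borel_measurable (?M (IndepIdx N))"
    if "r \<in> orbit_reps N" for r
    by (rule measurable_PiM_depends_on[OF measurable_orbit_action[OF that] _ orbit_block_subset])
      (simp add: orbit_action_restrict[OF that])
  have "(\<integral>\<^sup>+x. ennreal (exp (- S_ST N lam (ST_tensor N x))) \<partial>?M (IndepIdx N))
      = (\<integral>\<^sup>+x. (\<Prod>r\<in>orbit_reps N. ?f r x) \<partial>?M (\<Union>r\<in>orbit_reps N. orbit_block N r))"
    by (simp only: density UN_orbit_block)
  also have "\<dots> = (\<Prod>r\<in>orbit_reps N. \<integral>\<^sup>+x. ?f r x \<partial>?M (orbit_block N r))"
  proof (rule product_nn_integral_prod_blocks)
    fix r assume r: "r \<in> orbit_reps N"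
    show "finite (orbit_block N r)"
      by (simp add: orbit_block_def)
    show "?f r \<in> borel_measurable (?M (orbit_block N r))"
      by (rule meas_block[OF r])
    show "?f r x = ?f r (restrict x (orbit_block N r))" for x
      by (simp add: orbit_action_restrict[OF r])
  qed (simp_all add: disjoint_family_orbit_block)
  also have "\<dots> = ennreal (\<Prod>r\<in>orbit_reps N. orbit_integral N lam r)"
    using assms by (simp add: nn_integral_exp_neg_orbit_action orbit_integral_nonneg prod_ennreal)
  finally have "(\<integral>\<^sup>+x. ennreal (exp (- S_ST N lam (ST_tensor N x))) \<partial>?M (IndepIdx N))
      = ennreal (\<Prod>r\<in>orbit_reps N. orbit_integral N lam r)" .
  moreover have "(\<lambda>x. exp (- S_ST N lam (ST_tensor N x))) \<in> borel_measurable (?M (IndepIdx N))"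
    unfolding S_ST_eq_sum_orbit_action
    by (intro measurable_compose[OF _ borel_measurable_exp] borel_measurable_uminus borel_measurable_sum
        meas_action)
  ultimately show ?thesis
    using assms unfolding Z_ST_def
    by (simp add: integral_eq_nn_integral orbit_integral_nonneg prod_nonneg)
qed

lemma double_card_pairs_le: "2 * card {(a, d). a \<le> d \<and> d < N} = N * (N + 1)"
proof (induction N)
  case (Suc N)
  have "{(a, d). a \<le> d \<and> d < Suc N} = {(a, d). a \<le> d \<and> d < N} \<union> (\<lambda>a. (a, N)) ` {..N}"
    by (auto simp: less_Suc_eq)
  moreover have "finite {(a, d). a \<le> d \<and> d < N}"
    by (rule finite_subset[of _ "{..N} \<times> {..<N}"]) auto
  moreover have "{(a, d). a \<le> d \<and> d < N} \<inter> (\<lambda>a. (a, N)) ` {..N} = {}"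
    by auto
  ultimately have "card {(a, d). a \<le> d \<and> d < Suc N} = card {(a, d). a \<le> d \<and> d < N} + Suc N"
    by (simp add: card_Un_disjoint card_image inj_on_def)
  with Suc show ?case
    by simp
qed simp

lemma double_card_pairs_less: "2 * card {(a, d). a < d \<and> d < N} = N * (N - 1)"
proof (induction N)
  case (Suc N)
  have "{(a, d). a < d \<and> d < Suc N} = {(a, d). a < d \<and> d < N} \<union> (\<lambda>a. (a, N)) ` {..<N}"
    by (auto simp: less_Suc_eq)
  moreover have "finite {(a, d). a < d \<and> d < N}"
    by (rule finite_subset[of _ "{..<N} \<times> {..<N}"]) auto
  moreover have "{(a, d). a < d \<and> d < N} \<inter> (\<lambda>a. (a, N)) ` {..<N} = {}"
    by auto
  ultimately have "card {(a, d). a < d \<and> d < Suc N} = card {(a, d). a < d \<and> d < N} + N"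
    by (simp add: card_Un_disjoint card_image inj_on_def)
  with Suc show ?case
    by (cases N) (simp_all add: algebra_simps)
qed simp

lemma card_pairs_of_pairs:
  assumes "2 * card P = n"
  shows "real (card ((\<lambda>((a, d), (b, c)). (a, b, c, d :: nat)) ` (P \<times> P))) = (real n / 2)\<^sup>2"
proof -
  have "inj_on (\<lambda>((a, d), (b, c)). (a, b, c, d :: nat)) (P \<times> P)"
    by (auto simp: inj_on_def)
  moreover have "real n = 2 * real (card P)"
    unfolding assms[symmetric] by simp
  ultimately show ?thesis
    by (simp add: card_image card_cartesian_product power2_eq_square)
qed

lemma card_orbit_reps: "real (card (orbit_reps N)) = (real (N * (N + 1)) / 2)\<^sup>2"
proof -
  let ?P = "{(a, d). a \<le> d \<and> d < N}"
  have "orbit_reps N = (\<lambda>((a, d), (b, c)). (a, b, c, d)) ` (?P \<times> ?P)"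
    by (force simp: orbit_reps_def Idx_def image_iff)
  then show ?thesis
    using card_pairs_of_pairs[OF double_card_pairs_le] by simp
qed

lemma card_free_orbit_reps:
  "real (card {r \<in> orbit_reps N. free_orbit r}) = (real (N * (N - 1)) / 2)\<^sup>2"
proof -
  let ?P = "{(a, d). a < d \<and> d < N}"
  have "{r \<in> orbit_reps N. free_orbit r} = (\<lambda>((a, d), (b, c)). (a, b, c, d)) ` (?P \<times> ?P)"
    by (force simp: orbit_reps_def Idx_def image_iff)
  then show ?thesis
    using card_pairs_of_pairs[OF double_card_pairs_less] by simp
qed

lemma orbit_integral_ratio:
  assumes "N \<ge> 1" "\<bar>lam\<bar> < 1"
  shows "orbit_integral N lam r / orbit_integral N 0 r
    = (1 + lam) powr (-(1/2)) * (if free_orbit r then (1 - lam) powr (-(1/2)) else 1)"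
proof -
  have inv_sqrt: "x powr (-(1/2)) = 1 / sqrt x" if "0 < x" for x :: real
    using that by (simp add: powr_minus_divide powr_half_sqrt)
  have "0 < 1 + lam" "0 < 1 - lam"
    using assms by auto
  show ?thesis
  proof (cases "free_orbit r")
    case True
    have "sqrt (1 - lam\<^sup>2) = sqrt (1 + lam) * sqrt (1 - lam)"
      by (simp add: real_sqrt_mult[symmetric] power2_eq_square algebra_simps)
    then show ?thesis
      using True assms \<open>0 < 1 + lam\<close> \<open>0 < 1 - lam\<close>
      by (simp add: orbit_integral_def inv_sqrt)
  next
    case False
    have "orbit_integral N lam r / orbit_integral N 0 r
        = sqrt ((pi / (orbit_weight N r * (1 + lam))) / (pi / orbit_weight N r))"
      using False
      by (simp only: orbit_integral_def if_False add_0_right mult_1_right real_sqrt_divide)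
    also have "(pi / (orbit_weight N r * (1 + lam))) / (pi / orbit_weight N r) = 1 / (1 + lam)"
      using orbit_weight_pos[OF assms(1), of r] by simp
    also have "sqrt (1 / (1 + lam)) = 1 / sqrt (1 + lam)"
      by (simp add: real_sqrt_divide)
    finally show ?thesis
      using False \<open>0 < 1 + lam\<close> by (simp add: inv_sqrt)
  qed
qed

theorem proposition5p8:
  fixes N :: nat and lam :: real
  assumes "N \<ge> 1" and "-1 < lam" and "lam < 1"
  shows "Z_ST N lam / Z_ST N 0 =
    (1 + lam) powr (-(1/2) * (real (N * (N + 1)) / 2)^2) *
    (1 - lam) powr (-(1/2) * (real (N * (N - 1)) / 2)^2)"
proof -
  have lam: "\<bar>lam\<bar> < 1" "0 < 1 + lam" "0 < 1 - lam"
    using assms by auto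
  have "Z_ST N lam / Z_ST N 0
      = (\<Prod>r\<in>orbit_reps N. orbit_integral N lam r / orbit_integral N 0 r)"
    using assms(1) lam(1) by (simp add: Z_ST_eq_prod_orbit_integral prod_dividef)
  also have "\<dots> = (\<Prod>r\<in>orbit_reps N.
      (1 + lam) powr (-(1/2)) * (if free_orbit r then (1 - lam) powr (-(1/2)) else 1))"
    using assms(1) lam(1) by (intro prod.cong refl orbit_integral_ratio)
  also have "\<dots> = ((1 + lam) powr (-(1/2))) ^ card (orbit_reps N)
      * ((1 - lam) powr (-(1/2))) ^ card {r \<in> orbit_reps N. free_orbit r}"
    by (simp add: prod.distrib prod.inter_filter[symmetric])
  also have "\<dots> = (1 + lam) powr (-(1/2) * (real (N * (N + 1)) / 2)^2) *
      (1 - lam) powr (-(1/2) * (real (N * (N - 1)) / 2)^2)"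
    using lam(2,3)
    by (simp add: powr_realpow[symmetric] powr_powr card_orbit_reps card_free_orbit_reps)
  finally show ?thesis .
qed

end
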